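(* Let $\mathcal{L}$ be a propositional language, $\mathcal{L}_1$ an expansion of $\mathcal{L}$ with induced quantale embedding $i:\wp\Sigma_{\mathcal{L}}\to\wp\Sigma_{\mathcal{L}_1}$, and $(D,\vdash)$ a deductive system over $\mathcal{L}$ with associated nucleus $\gamma$ and $\wp\Sigma_{\mathcal{L}}$-module of theories $\mathrm{Th}$. Let $D_1$ be the domain of the same type as $D$ over $\mathcal{L}_1$. Then there exists a consequence relation $\vdash_1$ on $\wp D_1$ whose $\wp\Sigma_{\mathcal{L}_1}$-module of theories $\mathrm{Th}_1$ is isomorphic to $\wp\Sigma_{\mathcal{L}_1}\otimes_{\wp\Sigma_{\mathcal{L}}}\mathrm{Th}$.
   Context: A quantale is a complete lattice with a monoid product distributing over arbitrary joins; a left $Q$-module is a complete lattice with an associative unital action distributing over joins in each argument; a $Q$-module nucleus is a closure operator $\gamma$ with $a\gamma(u)\le\gamma(au)$, with image a $Q$-module under join $\gamma(\bigvee\cdot)$ and action $\gamma(au)$. For a language $\mathcal{L}$ and fixed denumerable $\mathrm{Var}$: $\mathit{Fm}_{\mathcal{L}}$ term algebra, $\Sigma_{\mathcal{L}}$ monoid of substitutions, $\wp\Sigma_{\mathcal{L}}$ quantale of subsets (union, elementwise composition, unit $\{\mathrm{id}\}$). A domain is formulas, equations $\mathit{Fm}_{\mathcal{L}}^2$ or sequents $\bigcup_{(m,n)\in T}\mathit{Fm}_{\mathcal{L}}^m\times\mathit{Fm}_{\mathcal{L}}^n$; "same type" means the same kind (and same $T$). $\wp D$ is a left $\wp\Sigma_{\mathcal{L}}$-module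 via $\Sigma\cdot\Phi=\{\sigma(\varphi)\}$. A (structural) consequence relation corresponds to the nucleus $\gamma(\Phi)=\{\psi:\Phi\vdash\psi\}$ on $\wp D$ and has module of theories $(\wp D)_\gamma$. An expansion $\mathcal{L}_1$ contains all connectives of $\mathcal{L}$ with the same arities; $i$ maps each substitution to the unique $\mathcal{L}_1$-substitution with the same values on $\mathrm{Var}$, making $\wp\Sigma_{\mathcal{L}_1}$ a right $\wp\Sigma_{\mathcal{L}}$-module. The tensor product $M_1\otimes_Q M_2$ (right module $M_1$, left module $M_2$) is the quotient of the free sup-lattice $\wp(M_1\times M_2)$ by the sup-lattice congruence generated by $(\{(\bigvee X,y)\},\bigcup_{x\in X}\{(x,y)\})$, $(\{(x,\bigvee Y)\},\bigcup_{y\in Y}\{(x,y)\})$, $(\{(xa,y)\},\{(x,ay)\})$, a left $\wp\Sigma_{\mathcal{L}_1}$-module via the first factor. *)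

theory Defs
  imports Main
begin

text \<open>Formulas over a fixed denumerable set of variables (indexed by nat) and
 connectives of type 'c. A language is a partial map from connectives to arities.\<close>

datatype 'c fm = Var nat | App 'c "'c fm list"

type_synonym 'c lang = "'c \<Rightarrow> nat option"

inductive_set Fm :: "'c lang \<Rightarrow> 'c fm set" for L :: "'c lang" where
  Fm_Var: "Var v \<in> Fm L"
| Fm_App: "L c = Some (length xs) \<Longrightarrow> \<forall>x\<in>set xs. x \<in> Fm L \<Longrightarrow> App c xs \<in> Fm L"

definition expansion :: "'c lang \<Rightarrow> 'c lang \<Rightarrow> bool" where
  "expansion L L1 \<longleftrightarrow> L \<subseteq>\<^sub>m L1"

type_synonym 'c subst = "nat \<Rightarrow> 'c fm"

fun subst :: "'c subst \<Rightarrow> 'c fm \<Rightarrow> 'c fm" where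
  "subst \<sigma> (Var v) = \<sigma> v"
| "subst \<sigma> (App c xs) = App c (map (subst \<sigma>) xs)"

definition Subst :: "'c lang \<Rightarrow> 'c subst set" where
  "Subst L = {\<sigma>. \<forall>v. \<sigma> v \<in> Fm L}"

definition scomp :: "'c subst \<Rightarrow> 'c subst \<Rightarrow> 'c subst" where
  "scomp \<sigma> \<tau> = (\<lambda>v. subst \<sigma> (\<tau> v))"

definition qmult :: "'c subst set \<Rightarrow> 'c subst set \<Rightarrow> 'c subst set" where
  "qmult A B = {scomp \<sigma> \<tau> | \<sigma> \<tau>. \<sigma> \<in> A \<and> \<tau> \<in> B}"

text \<open>The map i: an L-substitution goes to the unique L1-substitution with the same
 values on the variables; with our representation this is the same function.\<close>
definition subst_embed :: "'c subst \<Rightarrow> 'c subst" where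
  "subst_embed \<sigma> = (\<lambda>v. \<sigma> v)"

definition qemb :: "'c subst set \<Rightarrow> 'c subst set" where
  "qemb A = subst_embed ` A"

text \<open>Elements of a domain are encoded as pairs of formula lists: a formula phi as
 ([phi],[]), an equation phi = psi as ([phi],[psi]), a sequent as (lhs, rhs).\<close>
type_synonym 'c elem = "'c fm list \<times> 'c fm list"

datatype dkind = Formulas | Equations | Sequents "(nat \<times> nat) set"

fun domain_of :: "dkind \<Rightarrow> 'c lang \<Rightarrow> 'c elem set" where
  "domain_of Formulas L = {([\<phi>], []) | \<phi>. \<phi> \<in> Fm L}"
| "domain_of Equations L = {([\<phi>], [\<psi>]) | \<phi> \<psi>. \<phi> \<in> Fm L \<and> \<psi> \<in> Fm L}"
| "domain_of (Sequents T) L = {(xs, ys). (length xs, length ys) \<in> T \<and>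
      set xs \<subseteq> Fm L \<and> set ys \<subseteq> Fm L}"

definition sact :: "'c subst \<Rightarrow> 'c elem \<Rightarrow> 'c elem" where
  "sact \<sigma> e = (map (subst \<sigma>) (fst e), map (subst \<sigma>) (snd e))"

definition sset :: "'c subst set \<Rightarrow> 'c elem set \<Rightarrow> 'c elem set" where
  "sset A \<Phi> = {sact \<sigma> \<phi> | \<sigma> \<phi>. \<sigma> \<in> A \<and> \<phi> \<in> \<Phi>}"

definition consequence_relation ::
  "'c lang \<Rightarrow> dkind \<Rightarrow> ('c elem set \<Rightarrow> 'c elem \<Rightarrow> bool) \<Rightarrow> bool" where
  "consequence_relation L K ent \<longleftrightarrow>
     (let D = domain_of K L in
       (\<forall>\<Phi> \<phi>. ent \<Phi> \<phi> \<longrightarrow> \<Phi> \<subseteq> D \<and> \<phi> \<in> D)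
     \<and> (\<forall>\<Phi> \<phi>. \<Phi> \<subseteq> D \<and> \<phi> \<in> \<Phi> \<longrightarrow> ent \<Phi> \<phi>)
     \<and> (\<forall>\<Phi> \<Psi> \<phi>. ent \<Phi> \<phi> \<and> \<Phi> \<subseteq> \<Psi> \<and> \<Psi> \<subseteq> D \<longrightarrow> ent \<Psi> \<phi>)
     \<and> (\<forall>\<Phi> \<Psi> \<phi>. \<Phi> \<subseteq> D \<and> (\<forall>\<psi>\<in>\<Psi>. ent \<Phi> \<psi>) \<and> ent \<Psi> \<phi> \<longrightarrow> ent \<Phi> \<phi>)
     \<and> (\<forall>\<Phi> \<phi> \<sigma>. ent \<Phi> \<phi> \<and> \<sigma> \<in> Subst L \<longrightarrow> ent (sset {\<sigma>} \<Phi>) (sact \<sigma> \<phi>)))"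

definition ccl :: "('c elem set \<Rightarrow> 'c elem \<Rightarrow> bool) \<Rightarrow> 'c elem set \<Rightarrow> 'c elem set" where
  "ccl ent \<Phi> = {\<psi>. ent \<Phi> \<psi>}"

definition theories :: "'c elem set \<Rightarrow> ('c elem set \<Rightarrow> 'c elem \<Rightarrow> bool) \<Rightarrow> 'c elem set set" where
  "theories D ent = {\<Phi>. \<Phi> \<subseteq> D \<and> ccl ent \<Phi> = \<Phi>}"

definition th_join :: "('c elem set \<Rightarrow> 'c elem \<Rightarrow> bool) \<Rightarrow> 'c elem set set \<Rightarrow> 'c elem set" where
  "th_join ent X = ccl ent (\<Union>X)"

definition th_act :: "('c elem set \<Rightarrow> 'c elem \<Rightarrow> bool) \<Rightarrow> 'c subst set \<Rightarrow> 'c elem set \<Rightarrow> 'c elem set" where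
  "th_act ent A \<Phi> = ccl ent (sset A \<Phi>)"

definition suplat_cong :: "'a set \<Rightarrow> ('a set \<times> 'a set) set \<Rightarrow> bool" where
  "suplat_cong S R \<longleftrightarrow> equiv (Pow S) R \<and>
     (\<forall>I. I \<subseteq> R \<longrightarrow> (\<Union>(fst ` I), \<Union>(snd ` I)) \<in> R)"

definition cong_gen :: "'a set \<Rightarrow> ('a set \<times> 'a set) set \<Rightarrow> ('a set \<times> 'a set) set" where
  "cong_gen S G = \<Inter>{R. suplat_cong S R \<and> G \<subseteq> R}"

type_synonym 'c tpair = "'c subst set \<times> 'c elem set"

definition tensor_gens :: "'c lang \<Rightarrow> 'c lang \<Rightarrow> dkind \<Rightarrow> ('c elem set \<Rightarrow> 'c elem \<Rightarrow> bool)
    \<Rightarrow> ('c tpair set \<times> 'c tpair set) set" where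
  "tensor_gens L L1 K ent =
     (let M1 = Pow (Subst L1); M2 = theories (domain_of K L) ent in
       {({(\<Union>Xs, y)}, (\<lambda>x. (x, y)) ` Xs) | Xs y. Xs \<subseteq> M1 \<and> y \<in> M2}
     \<union> {({(x, th_join ent Ys)}, (\<lambda>y. (x, y)) ` Ys) | x Ys. x \<in> M1 \<and> Ys \<subseteq> M2}
     \<union> {({(qmult x (qemb a), y)}, {(x, th_act ent a y)}) | x a y.
           x \<in> M1 \<and> a \<in> Pow (Subst L) \<and> y \<in> M2})"

definition tensor_rel :: "'c lang \<Rightarrow> 'c lang \<Rightarrow> dkind \<Rightarrow> ('c elem set \<Rightarrow> 'c elem \<Rightarrow> bool)
    \<Rightarrow> ('c tpair set \<times> 'c tpair set) set" where
  "tensor_rel L L1 K ent =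
     cong_gen (Pow (Subst L1) \<times> theories (domain_of K L) ent) (tensor_gens L L1 K ent)"

definition tensor_carrier :: "'c lang \<Rightarrow> 'c lang \<Rightarrow> dkind \<Rightarrow> ('c elem set \<Rightarrow> 'c elem \<Rightarrow> bool)
    \<Rightarrow> 'c tpair set set set" where
  "tensor_carrier L L1 K ent =
     Pow (Pow (Subst L1) \<times> theories (domain_of K L) ent) // tensor_rel L L1 K ent"

definition tensor_join :: "'c lang \<Rightarrow> 'c lang \<Rightarrow> dkind \<Rightarrow> ('c elem set \<Rightarrow> 'c elem \<Rightarrow> bool)
    \<Rightarrow> 'c tpair set set set \<Rightarrow> 'c tpair set set" where
  "tensor_join L L1 K ent Cs =
     tensor_rel L L1 K ent `` {\<Union>C\<in>Cs. (SOME X. X \<in> C)}"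

definition tensor_act :: "'c lang \<Rightarrow> 'c lang \<Rightarrow> dkind \<Rightarrow> ('c elem set \<Rightarrow> 'c elem \<Rightarrow> bool)
    \<Rightarrow> 'c subst set \<Rightarrow> 'c tpair set set \<Rightarrow> 'c tpair set set" where
  "tensor_act L L1 K ent a C =
     tensor_rel L L1 K ent `` {{(qmult a x, y) | x y. (x, y) \<in> (SOME X. X \<in> C)}}"

definition module_iso :: "'q set \<Rightarrow> 'a set \<Rightarrow> ('a set \<Rightarrow> 'a) \<Rightarrow> ('q \<Rightarrow> 'a \<Rightarrow> 'a)
    \<Rightarrow> 'b set \<Rightarrow> ('b set \<Rightarrow> 'b) \<Rightarrow> ('q \<Rightarrow> 'b \<Rightarrow> 'b) \<Rightarrow> ('a \<Rightarrow> 'b) \<Rightarrow> bool" where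
  "module_iso Q A joinA actA B joinB actB f \<longleftrightarrow>
     bij_betw f A B
   \<and> (\<forall>X. X \<subseteq> A \<longrightarrow> f (joinA X) = joinB (f ` X))
   \<and> (\<forall>q\<in>Q. \<forall>x\<in>A. f (actA q x) = actB q (f x))"

end

theory Submission
  imports Defs
begin

text \<open>
  Take for ent1 the least structural consequence relation over L1 containing every
  L1-instance of a rule of ent; its theories are the subsets of the L1-domain closed under
  these instances. A formal join P of pairs (x, y), with x a set of L1-substitutions and y
  an ent-theory, is sent to the ent1-closure of the union of the sets x \<cdot> y. This map
  respects the generating relations of the tensor product. Conversely P is equivalent to
  the set of all pairs below its image, because the elements \<rho>(d) whose simple tensors
  {\<rho>} \<otimes> ccl ent {d} lie below P form an instance-closed set. The crux is that a
  simple tensor depends only on the element \<rho>(d): every element of a domain is an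
  instance of a generic element made of distinct variables, and L-substitutions can be
  moved across the tensor sign.
\<close>

lemma subst_Var [simp]: "subst Var \<phi> = \<phi>"
  by (induction \<phi>) (auto intro: map_idI)

lemma subst_subst: "subst \<sigma> (subst \<tau> \<phi>) = subst (scomp \<sigma> \<tau>) \<phi>"
  by (induction \<phi>) (auto simp: scomp_def)

lemma subst_in_Fm: "\<phi> \<in> Fm L \<Longrightarrow> \<sigma> \<in> Subst L \<Longrightarrow> subst \<sigma> \<phi> \<in> Fm L"
  by (induction rule: Fm.induct) (auto simp: Subst_def intro!: Fm.intros)

lemma Fm_subset_expansion:
  assumes "expansion L L1"
  shows "Fm L \<subseteq> Fm L1"
proof
  fix \<phi> assume "\<phi> \<in> Fm L"
  then show "\<phi> \<in> Fm L1"
  proof (induction rule: Fm.induct)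
    case (Fm_App c xs)
    then have "L1 c = Some (length xs)"
      using assms unfolding expansion_def map_le_def by (metis domI)
    with Fm_App show ?case by (auto intro!: Fm.Fm_App)
  qed (rule Fm.Fm_Var)
qed

lemma Subst_subset_expansion: "expansion L L1 \<Longrightarrow> Subst L \<subseteq> Subst L1"
  using Fm_subset_expansion by (fastforce simp: Subst_def)

lemma domain_of_subset_expansion:
  assumes "expansion L L1"
  shows "domain_of K L \<subseteq> domain_of K L1"
  using Fm_subset_expansion[OF assms] by (cases K) auto

lemma scomp_in_Subst: "\<sigma> \<in> Subst L \<Longrightarrow> \<tau> \<in> Subst L \<Longrightarrow> scomp \<sigma> \<tau> \<in> Subst L"
  by (auto simp: Subst_def scomp_def subst_in_Fm)

lemma sact_Var [simp]: "sact Var e = e"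
  by (simp add: sact_def map_idI)

lemma sact_sact: "sact \<sigma> (sact \<tau> e) = sact (scomp \<sigma> \<tau>) e"
  by (simp add: sact_def subst_subst)

lemma sact_in_domain_of: "d \<in> domain_of K L \<Longrightarrow> \<sigma> \<in> Subst L \<Longrightarrow> sact \<sigma> d \<in> domain_of K L"
  by (cases K) (auto simp: sact_def subst_in_Fm)

lemma sset_eq: "sset A \<Phi> = (\<Union>\<sigma>\<in>A. sact \<sigma> ` \<Phi>)"
  by (auto simp: sset_def)

lemma sset_singleton [simp]: "sset {\<sigma>} \<Phi> = sact \<sigma> ` \<Phi>"
  by (auto simp: sset_def)

lemma sset_mono: "A \<subseteq> B \<Longrightarrow> \<Phi> \<subseteq> \<Psi> \<Longrightarrow> sset A \<Phi> \<subseteq> sset B \<Psi>"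
  unfolding sset_def by blast

lemma sset_subset_domain_of:
  "\<Phi> \<subseteq> domain_of K L \<Longrightarrow> A \<subseteq> Subst L \<Longrightarrow> sset A \<Phi> \<subseteq> domain_of K L"
  unfolding sset_eq by (blast intro: sact_in_domain_of)

lemma sset_qmult: "sset (qmult A B) \<Phi> = sset A (sset B \<Phi>)"
proof -
  have "qmult A B = (\<Union>\<sigma>\<in>A. \<Union>\<tau>\<in>B. {scomp \<sigma> \<tau>})"
    by (auto simp: qmult_def)
  then show ?thesis
    by (simp add: sset_eq image_UN image_image sact_sact) blast
qed

lemma sset_Union_left: "sset (\<Union>As) \<Phi> = (\<Union>A\<in>As. sset A \<Phi>)"
  by (auto simp: sset_eq)

lemma sset_Union_right: "sset A (\<Union>\<Phi>s) = (\<Union>\<Phi>\<in>\<Phi>s. sset A \<Phi>)"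
  by (auto simp: sset_eq)

lemma qmult_singleton: "qmult {\<sigma>} {\<tau>} = {scomp \<sigma> \<tau>}"
  by (auto simp: qmult_def)

lemma qmult_subset_Subst: "A \<subseteq> Subst L \<Longrightarrow> B \<subseteq> Subst L \<Longrightarrow> qmult A B \<subseteq> Subst L"
  by (auto simp: qmult_def intro: scomp_in_Subst)

lemma qemb_id [simp]: "qemb A = A"
  by (simp add: qemb_def subst_embed_def)

definition generic_elem :: "nat \<Rightarrow> nat \<Rightarrow> 'c elem" where
  "generic_elem m n = (map Var [0..<m], map Var [m..<m + n])"

definition shape :: "'c elem \<Rightarrow> 'c elem" where
  "shape e = generic_elem (length (fst e)) (length (snd e))"

text \<open>Variables beyond the shape of e are sent to the junk value Var 0.\<close>
definition filler :: "'c elem \<Rightarrow> 'c subst" where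
  "filler e = (\<lambda>v. if v < length (fst e) then fst e ! v
      else if v < length (fst e) + length (snd e) then snd e ! (v - length (fst e))
      else Var 0)"

lemma sact_generic_elem: "sact \<sigma> (generic_elem m n) = (map \<sigma> [0..<m], map \<sigma> [m..<m + n])"
  by (simp add: sact_def generic_elem_def)

lemma sact_generic_elem_eq_iff:
  "sact \<alpha> (generic_elem m n) = sact \<beta> (generic_elem m n) \<longleftrightarrow> (\<forall>v < m + n. \<alpha> v = \<beta> v)"
  by (auto simp: sact_generic_elem)

lemma sact_filler_shape: "sact (filler e) (shape e) = e"
proof -
  obtain xs ys where e: "e = (xs, ys)" by fastforce
  have "map (filler e) [0..<length xs] = xs" "map (filler e) [length xs..<length xs + length ys] = ys"
    by (auto simp: filler_def e intro!: nth_equalityI)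
  then show ?thesis by (simp add: shape_def sact_generic_elem e)
qed

lemma shape_sact [simp]: "shape (sact \<sigma> e) = shape e"
  by (simp add: shape_def sact_def)

lemma shape_in_domain_of: "e \<in> domain_of K L' \<Longrightarrow> shape e \<in> domain_of K L"
  by (cases K) (auto simp: shape_def generic_elem_def intro: Fm.Fm_Var)

lemma filler_in_Subst:
  assumes "e \<in> domain_of K L"
  shows "filler e \<in> Subst L"
proof -
  have "set (fst e) \<subseteq> Fm L \<and> set (snd e) \<subseteq> Fm L"
    using assms by (cases K) auto
  then show ?thesis
    unfolding Subst_def filler_def by (auto simp: subset_iff intro: Fm.Fm_Var nth_mem)
qed

locale consequence =
  fixes L :: "'c lang" and K :: dkind and ent :: "'c elem set \<Rightarrow> 'c elem \<Rightarrow> bool"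
  assumes consequence_relation: "consequence_relation L K ent"
begin

lemma ent_in_domain_of: "ent \<Phi> \<phi> \<Longrightarrow> \<Phi> \<subseteq> domain_of K L \<and> \<phi> \<in> domain_of K L"
  and ent_refl: "\<Phi> \<subseteq> domain_of K L \<Longrightarrow> \<phi> \<in> \<Phi> \<Longrightarrow> ent \<Phi> \<phi>"
  and ent_mono: "ent \<Phi> \<phi> \<Longrightarrow> \<Phi> \<subseteq> \<Psi> \<Longrightarrow> \<Psi> \<subseteq> domain_of K L \<Longrightarrow> ent \<Psi> \<phi>"
  and ent_cut: "\<Phi> \<subseteq> domain_of K L \<Longrightarrow> (\<And>\<psi>. \<psi> \<in> \<Psi> \<Longrightarrow> ent \<Phi> \<psi>) \<Longrightarrow> ent \<Psi> \<phi> \<Longrightarrow> ent \<Phi> \<phi>"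
  and ent_sact: "ent \<Phi> \<phi> \<Longrightarrow> \<sigma> \<in> Subst L \<Longrightarrow> ent (sact \<sigma> ` \<Phi>) (sact \<sigma> \<phi>)"
  using consequence_relation unfolding consequence_relation_def Let_def sset_singleton
  by (elim conjE; metis)+
lemma ccl_subset_domain_of: "ccl ent \<Phi> \<subseteq> domain_of K L"
  unfolding ccl_def using ent_in_domain_of by blast

lemma ccl_increasing: "\<Phi> \<subseteq> domain_of K L \<Longrightarrow> \<Phi> \<subseteq> ccl ent \<Phi>"
  unfolding ccl_def using ent_refl by blast

lemma ccl_mono: "\<Phi> \<subseteq> \<Psi> \<Longrightarrow> \<Psi> \<subseteq> domain_of K L \<Longrightarrow> ccl ent \<Phi> \<subseteq> ccl ent \<Psi>"
  unfolding ccl_def using ent_mono by blast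

lemma ccl_least: "\<Phi> \<subseteq> ccl ent \<Psi> \<Longrightarrow> \<Psi> \<subseteq> domain_of K L \<Longrightarrow> ccl ent \<Phi> \<subseteq> ccl ent \<Psi>"
  unfolding ccl_def using ent_cut[of \<Psi> \<Phi>] by blast

lemma ccl_idem:
  assumes "\<Phi> \<subseteq> domain_of K L"
  shows "ccl ent (ccl ent \<Phi>) = ccl ent \<Phi>"
proof (rule subset_antisym)
  show "ccl ent (ccl ent \<Phi>) \<subseteq> ccl ent \<Phi>"
    using order_refl assms by (rule ccl_least)
  show "ccl ent \<Phi> \<subseteq> ccl ent (ccl ent \<Phi>)"
    by (rule ccl_increasing[OF ccl_subset_domain_of])
qed

lemma ccl_in_theories: "\<Phi> \<subseteq> domain_of K L \<Longrightarrow> ccl ent \<Phi> \<in> theories (domain_of K L) ent"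
  by (simp add: theories_def ccl_idem ccl_subset_domain_of)

lemma ccl_UN_ccl:
  assumes "\<And>i. i \<in> I \<Longrightarrow> \<Phi> i \<subseteq> domain_of K L"
  shows "ccl ent (\<Union>i\<in>I. ccl ent (\<Phi> i)) = ccl ent (\<Union>i\<in>I. \<Phi> i)"
proof (rule subset_antisym)
  have U: "(\<Union>i\<in>I. \<Phi> i) \<subseteq> domain_of K L"
    using assms by blast
  have "ccl ent (\<Phi> i) \<subseteq> ccl ent (\<Union>i\<in>I. \<Phi> i)" if "i \<in> I" for i
    using _ U by (rule ccl_mono) (use that in blast)
  then have "(\<Union>i\<in>I. ccl ent (\<Phi> i)) \<subseteq> ccl ent (\<Union>i\<in>I. \<Phi> i)"
    by (rule UN_least)
  then show "ccl ent (\<Union>i\<in>I. ccl ent (\<Phi> i)) \<subseteq> ccl ent (\<Union>i\<in>I. \<Phi> i)"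
    using U by (rule ccl_least)
  have "(\<Union>i\<in>I. \<Phi> i) \<subseteq> (\<Union>i\<in>I. ccl ent (\<Phi> i))"
    using assms ccl_increasing by (intro UN_mono) auto
  then show "ccl ent (\<Union>i\<in>I. \<Phi> i) \<subseteq> ccl ent (\<Union>i\<in>I. ccl ent (\<Phi> i))"
    by (rule ccl_mono) (use ccl_subset_domain_of in blast)
qed

lemma sset_ccl_subset:
  assumes "A \<subseteq> Subst L" "\<Phi> \<subseteq> domain_of K L"
  shows "sset A (ccl ent \<Phi>) \<subseteq> ccl ent (sset A \<Phi>)"
proof
  fix e assume "e \<in> sset A (ccl ent \<Phi>)"
  then obtain \<sigma> \<phi> where "\<sigma> \<in> A" "ent \<Phi> \<phi>" and e: "e = sact \<sigma> \<phi>"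
    by (auto simp: sset_eq ccl_def)
  with assms have "ent (sact \<sigma> ` \<Phi>) e" "sact \<sigma> ` \<Phi> \<subseteq> sset A \<Phi>"
    by (auto intro: ent_sact simp: sset_eq)
  moreover have "sset A \<Phi> \<subseteq> domain_of K L"
    using assms by (rule sset_subset_domain_of[rotated])
  ultimately show "e \<in> ccl ent (sset A \<Phi>)"
    unfolding ccl_def using ent_mono by blast
qed

lemma ccl_sset_ccl:
  assumes "A \<subseteq> Subst L" "\<Phi> \<subseteq> domain_of K L"
  shows "ccl ent (sset A (ccl ent \<Phi>)) = ccl ent (sset A \<Phi>)"
proof (rule subset_antisym)
  show "ccl ent (sset A (ccl ent \<Phi>)) \<subseteq> ccl ent (sset A \<Phi>)"
    using sset_ccl_subset[OF assms] sset_subset_domain_of[OF assms(2,1)] by (rule ccl_least)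
  show "ccl ent (sset A \<Phi>) \<subseteq> ccl ent (sset A (ccl ent \<Phi>))"
    using sset_mono[OF order_refl ccl_increasing[OF assms(2)]]
      sset_subset_domain_of[OF ccl_subset_domain_of assms(1)]
    by (rule ccl_mono)
qed

lemma theories_iff: "\<Phi> \<in> theories (domain_of K L) ent \<longleftrightarrow> \<Phi> \<subseteq> domain_of K L \<and> ccl ent \<Phi> = \<Phi>"
  by (simp add: theories_def)

lemma th_join_in_theories:
  assumes "Ys \<subseteq> theories (domain_of K L) ent"
  shows "th_join ent Ys \<in> theories (domain_of K L) ent"
proof -
  have "\<Union>Ys \<subseteq> domain_of K L"
    using assms unfolding theories_def by blast
  then show ?thesis
    unfolding th_join_def by (rule ccl_in_theories)
qed

lemma th_act_in_theories:
  assumes "A \<subseteq> Subst L" "y \<in> theories (domain_of K L) ent"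
  shows "th_act ent A y \<in> theories (domain_of K L) ent"
proof -
  have "sset A y \<subseteq> domain_of K L"
    using assms(2) sset_subset_domain_of[OF _ assms(1)] unfolding theories_def by blast
  then show ?thesis
    unfolding th_act_def by (rule ccl_in_theories)
qed

end

lemma suplat_cong_Inter:
  assumes "\<R> \<noteq> {}" "\<And>R. R \<in> \<R> \<Longrightarrow> suplat_cong S R"
  shows "suplat_cong S (\<Inter>\<R>)"
proof -
  have equiv: "\<And>R. R \<in> \<R> \<Longrightarrow> equiv (Pow S) R"
    and Union: "\<And>R I. R \<in> \<R> \<Longrightarrow> I \<subseteq> R \<Longrightarrow> (\<Union>(fst ` I), \<Union>(snd ` I)) \<in> R"
    using assms(2) unfolding suplat_cong_def by blast+
  obtain R0 where "R0 \<in> \<R>"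
    using assms(1) by blast
  have "equiv (Pow S) (\<Inter>\<R>)"
  proof (rule equivI)
    show "\<Inter>\<R> \<subseteq> Pow S \<times> Pow S"
      using equiv[OF \<open>R0 \<in> \<R>\<close>] \<open>R0 \<in> \<R>\<close> unfolding equiv_def by blast
    show "refl_on (Pow S) (\<Inter>\<R>)"
      using equiv unfolding equiv_def refl_on_def by blast
    show "sym (\<Inter>\<R>)"
      using equiv unfolding equiv_def sym_def by blast
    show "trans (\<Inter>\<R>)"
      using equiv unfolding equiv_def trans_def by blast
  qed
  with Union show ?thesis
    unfolding suplat_cong_def by blast
qed

lemma suplat_cong_Pow_Times: "suplat_cong S (Pow S \<times> Pow S)"
  unfolding suplat_cong_def equiv_def refl_on_def sym_def trans_def by (auto 0 3)

lemma suplat_cong_cong_gen: "G \<subseteq> Pow S \<times> Pow S \<Longrightarrow> suplat_cong S (cong_gen S G)"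
  unfolding cong_gen_def by (rule suplat_cong_Inter) (use suplat_cong_Pow_Times[of S] in blast)+

lemma cong_gen_incl: "G \<subseteq> cong_gen S G"
  unfolding cong_gen_def by blast

lemma cong_gen_least: "suplat_cong S R \<Longrightarrow> G \<subseteq> R \<Longrightarrow> cong_gen S G \<subseteq> R"
  unfolding cong_gen_def by blast

lemma suplat_cong_kernel:
  assumes "\<And>\<A>. \<A> \<subseteq> Pow S \<Longrightarrow> h (\<Union>\<A>) = j (h ` \<A>)"
  shows "suplat_cong S {(P, Q). P \<subseteq> S \<and> Q \<subseteq> S \<and> h P = h Q}"
  unfolding suplat_cong_def
proof (intro conjI allI impI)
  show "equiv (Pow S) {(P, Q). P \<subseteq> S \<and> Q \<subseteq> S \<and> h P = h Q}"
    by (auto simp: equiv_def refl_on_def sym_def trans_def)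
  fix I assume "I \<subseteq> {(P, Q). P \<subseteq> S \<and> Q \<subseteq> S \<and> h P = h Q}"
  then have I: "\<And>P Q. (P, Q) \<in> I \<Longrightarrow> P \<subseteq> S \<and> Q \<subseteq> S \<and> h P = h Q"
    by blast
  then have "h ` fst ` I = h ` snd ` I"
    by (force simp: image_image)
  moreover have "fst ` I \<subseteq> Pow S" "snd ` I \<subseteq> Pow S"
    using I by fastforce+
  ultimately show "(\<Union>(fst ` I), \<Union>(snd ` I)) \<in> {(P, Q). P \<subseteq> S \<and> Q \<subseteq> S \<and> h P = h Q}"
    using assms[of "fst ` I"] assms[of "snd ` I"] by auto
qed

text \<open>The order of the quotient sup-lattice, read on representatives.\<close>
definition cong_le :: "('a set \<times> 'a set) set \<Rightarrow> 'a set \<Rightarrow> 'a set \<Rightarrow> bool" where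
  "cong_le R P Q \<longleftrightarrow> (P \<union> Q, Q) \<in> R"

locale suplat_congruence =
  fixes S :: "'a set" and R :: "('a set \<times> 'a set) set"
  assumes suplat_cong: "suplat_cong S R"
begin

lemma rel_equiv: "equiv (Pow S) R"
  using suplat_cong unfolding suplat_cong_def by blast

lemma rel_refl: "P \<subseteq> S \<Longrightarrow> (P, P) \<in> R"
  using rel_equiv unfolding equiv_def refl_on_def by blast

lemma rel_subset: "(P, Q) \<in> R \<Longrightarrow> P \<subseteq> S \<and> Q \<subseteq> S"
  using rel_equiv unfolding equiv_def by blast

lemma rel_sym: "(P, Q) \<in> R \<Longrightarrow> (Q, P) \<in> R"
  using rel_equiv unfolding equiv_def sym_def by blast

lemma rel_trans: "(P, Q) \<in> R \<Longrightarrow> (Q, W) \<in> R \<Longrightarrow> (P, W) \<in> R"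
  using rel_equiv unfolding equiv_def trans_def by blast

lemma rel_Union: "I \<subseteq> R \<Longrightarrow> (\<Union>(fst ` I), \<Union>(snd ` I)) \<in> R"
  using suplat_cong unfolding suplat_cong_def by blast

lemma rel_UN: "(\<And>i. i \<in> I \<Longrightarrow> (f i, g i) \<in> R) \<Longrightarrow> ((\<Union>i\<in>I. f i), (\<Union>i\<in>I. g i)) \<in> R"
  using rel_Union[of "(\<lambda>i. (f i, g i)) ` I"] by (auto simp: image_image)

lemma rel_Un: "(P, Q) \<in> R \<Longrightarrow> (P', Q') \<in> R \<Longrightarrow> (P \<union> P', Q \<union> Q') \<in> R"
  using rel_Union[of "{(P, Q), (P', Q')}"] by simp

lemma cong_le_of_rel: "(P, Q) \<in> R \<Longrightarrow> cong_le R P Q"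
  unfolding cong_le_def using rel_Un[of P Q Q Q] rel_refl rel_subset by auto

lemma cong_le_subset: "P \<subseteq> Q \<Longrightarrow> Q \<subseteq> S \<Longrightarrow> cong_le R P Q"
  unfolding cong_le_def using rel_refl by (simp add: Un_absorb1)

lemma cong_le_trans:
  assumes "cong_le R P Q" "cong_le R Q W"
  shows "cong_le R P W"
proof -
  have PQ: "(P \<union> Q, Q) \<in> R" and QW: "(Q \<union> W, W) \<in> R"
    using assms unfolding cong_le_def by auto
  then have "W \<subseteq> S" "P \<union> Q \<subseteq> S"
    using rel_subset by auto
  have "(P \<union> Q \<union> W, Q \<union> W) \<in> R"
    using rel_Un[OF PQ rel_refl[OF \<open>W \<subseteq> S\<close>]] .
  then have "(P \<union> Q \<union> W, W) \<in> R"
    using QW by (rule rel_trans)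
  moreover have "(P \<union> W \<union> W, P \<union> W \<union> (Q \<union> W)) \<in> R"
    using rel_Un[OF rel_refl[of "P \<union> W"] rel_sym[OF QW]] \<open>W \<subseteq> S\<close> \<open>P \<union> Q \<subseteq> S\<close> by auto
  then have "(P \<union> W, P \<union> Q \<union> W) \<in> R"
    by (simp add: Un_ac)
  ultimately show ?thesis
    unfolding cong_le_def by (blast intro: rel_trans)
qed

lemma cong_le_UN:
  assumes "\<And>i. i \<in> I \<Longrightarrow> cong_le R (f i) Q" "Q \<subseteq> S"
  shows "cong_le R (\<Union>i\<in>I. f i) Q"
proof -
  have "((\<Union>i\<in>I. f i \<union> Q) \<union> Q, (\<Union>i\<in>I. Q) \<union> Q) \<in> R"
    using assms unfolding cong_le_def by (intro rel_Un rel_UN rel_refl)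
  moreover have "(\<Union>i\<in>I. f i \<union> Q) \<union> Q = (\<Union>i\<in>I. f i) \<union> Q" "(\<Union>i\<in>I. Q) \<union> Q = Q"
    by auto
  ultimately show ?thesis
    unfolding cong_le_def by simp
qed

lemma cong_le_antisym: "cong_le R P Q \<Longrightarrow> cong_le R Q P \<Longrightarrow> (P, Q) \<in> R"
  unfolding cong_le_def by (metis rel_sym rel_trans sup_commute)

end

locale expansion_setting = consequence L K ent
  for L :: "'c lang" and K :: dkind and ent :: "'c elem set \<Rightarrow> 'c elem \<Rightarrow> bool" +
  fixes L1 :: "'c lang"
  assumes expansion: "expansion L L1"
begin

lemma Subst_subset: "Subst L \<subseteq> Subst L1"
  using expansion by (rule Subst_subset_expansion)

lemma domain_of_subset: "domain_of K L \<subseteq> domain_of K L1"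
  using expansion by (rule domain_of_subset_expansion)

lemma sset_subset_domain_of1:
  "x \<subseteq> Subst L1 \<Longrightarrow> U \<subseteq> domain_of K L \<Longrightarrow> sset x U \<subseteq> domain_of K L1"
  using sset_subset_domain_of[of U K L1 x] domain_of_subset by blast

definition instance_closed :: "'c elem set \<Rightarrow> bool" where
  "instance_closed C \<longleftrightarrow> C \<subseteq> domain_of K L1 \<and>
     (\<forall>\<rho> \<Psi> \<chi>. \<rho> \<in> Subst L1 \<and> ent \<Psi> \<chi> \<and> sact \<rho> ` \<Psi> \<subseteq> C \<longrightarrow> sact \<rho> \<chi> \<in> C)"

definition ent1 :: "'c elem set \<Rightarrow> 'c elem \<Rightarrow> bool" where
  "ent1 \<Phi> \<psi> \<longleftrightarrow> \<Phi> \<subseteq> domain_of K L1 \<and> \<psi> \<in> domain_of K L1 \<and>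
     (\<forall>C. instance_closed C \<and> \<Phi> \<subseteq> C \<longrightarrow> \<psi> \<in> C)"

lemma instance_closed_vimage:
  assumes C: "instance_closed C" and \<sigma>: "\<sigma> \<in> Subst L1"
  shows "instance_closed {d \<in> domain_of K L1. sact \<sigma> d \<in> C}"
  unfolding instance_closed_def
proof (intro conjI allI impI)
  fix \<rho> \<Psi> \<chi>
  assume "\<rho> \<in> Subst L1 \<and> ent \<Psi> \<chi> \<and> sact \<rho> ` \<Psi> \<subseteq> {d \<in> domain_of K L1. sact \<sigma> d \<in> C}"
  then have \<rho>: "\<rho> \<in> Subst L1" and ent: "ent \<Psi> \<chi>" and "sact (scomp \<sigma> \<rho>) ` \<Psi> \<subseteq> C"
    by (auto simp: sact_sact)
  then have "sact (scomp \<sigma> \<rho>) \<chi> \<in> C"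
    using C scomp_in_Subst[OF \<sigma> \<rho>] unfolding instance_closed_def by blast
  moreover have "sact \<rho> \<chi> \<in> domain_of K L1"
    using ent_in_domain_of[OF ent] domain_of_subset \<rho> by (blast intro: sact_in_domain_of)
  ultimately show "sact \<rho> \<chi> \<in> {d \<in> domain_of K L1. sact \<sigma> d \<in> C}"
    by (simp add: sact_sact)
qed blast

lemma consequence_relation_ent1: "consequence_relation L1 K ent1"
  unfolding consequence_relation_def Let_def
proof (intro conjI allI impI)
  fix \<Phi> \<phi> \<sigma>
  assume "ent1 \<Phi> \<phi> \<and> \<sigma> \<in> Subst L1"
  then have \<Phi>: "\<Phi> \<subseteq> domain_of K L1" and \<phi>: "\<phi> \<in> domain_of K L1" and \<sigma>: "\<sigma> \<in> Subst L1"
    and closed: "\<And>C. instance_closed C \<Longrightarrow> \<Phi> \<subseteq> C \<Longrightarrow> \<phi> \<in> C"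
    unfolding ent1_def by blast+
  have "sact \<sigma> \<phi> \<in> C" if "instance_closed C" "sact \<sigma> ` \<Phi> \<subseteq> C" for C
    using closed[OF instance_closed_vimage[OF that(1) \<sigma>]] \<Phi> that(2) by blast
  moreover have "sact \<sigma> ` \<Phi> \<subseteq> domain_of K L1"
    using sset_subset_domain_of[OF \<Phi>, of "{\<sigma>}"] \<sigma> by simp
  ultimately show "ent1 (sset {\<sigma>} \<Phi>) (sact \<sigma> \<phi>)"
    using \<phi> \<sigma> unfolding ent1_def by (simp add: sact_in_domain_of)
qed (unfold ent1_def, blast+)

sublocale ent1: consequence L1 K ent1
  by unfold_locales (rule consequence_relation_ent1)

lemma ent1_instance:
  assumes "ent \<Psi> \<chi>" "\<rho> \<in> Subst L1"
  shows "ent1 (sact \<rho> ` \<Psi>) (sact \<rho> \<chi>)"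
proof -
  have "\<Psi> \<subseteq> domain_of K L1" "\<chi> \<in> domain_of K L1"
    using ent_in_domain_of[OF assms(1)] domain_of_subset by blast+
  with assms show ?thesis
    unfolding ent1_def instance_closed_def by (blast intro: sact_in_domain_of)
qed

lemma sset_ccl_subset_ccl1:
  assumes x: "x \<subseteq> Subst L1" and U: "U \<subseteq> domain_of K L"
  shows "sset x (ccl ent U) \<subseteq> ccl ent1 (sset x U)"
proof
  fix e assume "e \<in> sset x (ccl ent U)"
  then obtain \<rho> \<chi> where "\<rho> \<in> x" "ent U \<chi>" and e: "e = sact \<rho> \<chi>"
    by (auto simp: sset_eq ccl_def)
  with x have "ent1 (sact \<rho> ` U) e" "sact \<rho> ` U \<subseteq> sset x U"
    by (auto intro: ent1_instance simp: sset_eq)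
  moreover have "sset x U \<subseteq> domain_of K L1"
    using x U by (rule sset_subset_domain_of1)
  ultimately show "e \<in> ccl ent1 (sset x U)"
    unfolding ccl_def using ent1.ent_mono by blast
qed

lemma ccl1_sset_ccl:
  assumes x: "x \<subseteq> Subst L1" and U: "U \<subseteq> domain_of K L"
  shows "ccl ent1 (sset x (ccl ent U)) = ccl ent1 (sset x U)"
proof (rule subset_antisym)
  have "sset x U \<subseteq> domain_of K L1"
    using x U by (rule sset_subset_domain_of1)
  with sset_ccl_subset_ccl1[OF assms]
  show "ccl ent1 (sset x (ccl ent U)) \<subseteq> ccl ent1 (sset x U)"
    by (rule ent1.ccl_least)
  have "sset x (ccl ent U) \<subseteq> domain_of K L1"
    using x ccl_subset_domain_of by (rule sset_subset_domain_of1)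
  with sset_mono[OF order_refl ccl_increasing[OF U]]
  show "ccl ent1 (sset x U) \<subseteq> ccl ent1 (sset x (ccl ent U))"
    by (rule ent1.ccl_mono)
qed

end

definition sset_pairs :: "'c tpair set \<Rightarrow> 'c elem set" where
  "sset_pairs P = (\<Union>p\<in>P. sset (fst p) (snd p))"

lemma sset_pairs_singleton [simp]: "sset_pairs {(x, y)} = sset x y"
  by (simp add: sset_pairs_def)

lemma sset_pairs_Union: "sset_pairs (\<Union>\<P>) = (\<Union>P\<in>\<P>. sset_pairs P)"
  unfolding sset_pairs_def by blast

context expansion_setting
begin

abbreviation Th :: "'c elem set set" where
  "Th \<equiv> theories (domain_of K L) ent"

abbreviation Th1 :: "'c elem set set" where
  "Th1 \<equiv> theories (domain_of K L1) ent1"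

abbreviation tensor_pairs :: "'c tpair set" where
  "tensor_pairs \<equiv> Pow (Subst L1) \<times> Th"

abbreviation tensor_cong :: "('c tpair set \<times> 'c tpair set) set" where
  "tensor_cong \<equiv> tensor_rel L L1 K ent"

abbreviation tensor_le :: "'c tpair set \<Rightarrow> 'c tpair set \<Rightarrow> bool" where
  "tensor_le \<equiv> cong_le tensor_cong"

lemma tensor_gensE:
  assumes "(P, Q) \<in> tensor_gens L L1 K ent"
  obtains (Union_left) Xs y
    where "P = {(\<Union>Xs, y)}" "Q = (\<lambda>x. (x, y)) ` Xs" "Xs \<subseteq> Pow (Subst L1)" "y \<in> Th"
  | (join_right) x Ys
    where "P = {(x, th_join ent Ys)}" "Q = (\<lambda>y. (x, y)) ` Ys" "x \<subseteq> Subst L1" "Ys \<subseteq> Th"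
  | (act) x A y
    where "P = {(qmult x A, y)}" "Q = {(x, th_act ent A y)}" "x \<subseteq> Subst L1" "A \<subseteq> Subst L" "y \<in> Th"
  using assms unfolding tensor_gens_def Let_def qemb_id
proof (elim UnE CollectE exE conjE Pair_inject)
  fix Xs y assume "P = {(\<Union>Xs, y)}" "Q = (\<lambda>x. (x, y)) ` Xs" "Xs \<subseteq> Pow (Subst L1)" "y \<in> Th"
  then show thesis using Union_left[of Xs y] by simp
next
  fix x Ys assume "P = {(x, th_join ent Ys)}" "Q = (\<lambda>y. (x, y)) ` Ys" "x \<in> Pow (Subst L1)" "Ys \<subseteq> Th"
  then show thesis using join_right[of x Ys] by simp
next
  fix x A y assume "P = {(qmult x A, y)}" "Q = {(x, th_act ent A y)}" "x \<in> Pow (Subst L1)"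
    "A \<in> Pow (Subst L)" "y \<in> Th"
  then show thesis using act[of x A y] by simp
qed

lemma tensor_gens_subset: "tensor_gens L L1 K ent \<subseteq> Pow tensor_pairs \<times> Pow tensor_pairs"
proof (rule subrelI)
  fix P Q assume "(P, Q) \<in> tensor_gens L L1 K ent"
  then show "(P, Q) \<in> Pow tensor_pairs \<times> Pow tensor_pairs"
  proof (cases rule: tensor_gensE)
    case (Union_left Xs y)
    then show ?thesis by blast
  next
    case (join_right x Ys)
    then show ?thesis using th_join_in_theories[of Ys] by blast
  next
    case (act x A y)
    have "qmult x A \<subseteq> Subst L1"
      using qmult_subset_Subst[OF act(3) order_trans[OF act(4) Subst_subset]] .
    then show ?thesis using act th_act_in_theories[of A y] by blast
  qed
qed

sublocale tensor: suplat_congruence tensor_pairs tensor_cong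
  unfolding tensor_rel_def by unfold_locales (rule suplat_cong_cong_gen[OF tensor_gens_subset])

lemma tensor_cong_Union_left:
  assumes "Xs \<subseteq> Pow (Subst L1)" "y \<in> Th"
  shows "({(\<Union>Xs, y)}, (\<lambda>x. (x, y)) ` Xs) \<in> tensor_cong"
proof -
  have "({(\<Union>Xs, y)}, (\<lambda>x. (x, y)) ` Xs) \<in> tensor_gens L L1 K ent"
    unfolding tensor_gens_def Let_def by (rule UnI1, rule UnI1) (use assms in blast)
  then show ?thesis
    unfolding tensor_rel_def using cong_gen_incl by blast
qed

lemma tensor_cong_join_right:
  assumes "x \<subseteq> Subst L1" "Ys \<subseteq> Th"
  shows "({(x, th_join ent Ys)}, (\<lambda>y. (x, y)) ` Ys) \<in> tensor_cong"
proof -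
  have "({(x, th_join ent Ys)}, (\<lambda>y. (x, y)) ` Ys) \<in> tensor_gens L L1 K ent"
    unfolding tensor_gens_def Let_def by (rule UnI1, rule UnI2) (use assms in blast)
  then show ?thesis
    unfolding tensor_rel_def using cong_gen_incl by blast
qed

lemma tensor_cong_act:
  assumes "x \<subseteq> Subst L1" "A \<subseteq> Subst L" "y \<in> Th"
  shows "({(qmult x A, y)}, {(x, th_act ent A y)}) \<in> tensor_cong"
proof -
  have "({(qmult x A, y)}, {(x, th_act ent A y)}) \<in> tensor_gens L L1 K ent"
    unfolding tensor_gens_def Let_def qemb_id by (rule UnI2) (use assms in blast)
  then show ?thesis
    unfolding tensor_rel_def using cong_gen_incl by blast
qed

lemma sset_pairs_subset_domain_of1:
  assumes "P \<subseteq> tensor_pairs"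
  shows "sset_pairs P \<subseteq> domain_of K L1"
  unfolding sset_pairs_def
proof (rule UN_least)
  fix p assume "p \<in> P"
  with assms have "fst p \<subseteq> Subst L1 \<and> snd p \<subseteq> domain_of K L"
    unfolding theories_def by (cases p) auto
  then show "sset (fst p) (snd p) \<subseteq> domain_of K L1"
    by (intro sset_subset_domain_of1) auto
qed

lemma ccl1_sset_pairs_eq_if_tensor_gens:
  assumes "(P, Q) \<in> tensor_gens L L1 K ent"
  shows "ccl ent1 (sset_pairs P) = ccl ent1 (sset_pairs Q)"
  using assms
proof (cases rule: tensor_gensE)
  case (Union_left Xs y)
  then show ?thesis
    by (simp add: sset_pairs_def sset_Union_left)
next
  case (join_right x Ys)
  have "\<Union>Ys \<subseteq> domain_of K L"
    using join_right(4) unfolding theories_def by blast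
  with join_right show ?thesis
    by (simp add: sset_pairs_def th_join_def ccl1_sset_ccl sset_Union_right)
next
  case (act x A y)
  have "sset A y \<subseteq> domain_of K L"
    using act(4,5) sset_subset_domain_of unfolding theories_def by blast
  with act show ?thesis
    by (simp add: th_act_def ccl1_sset_ccl sset_qmult)
qed

lemma tensor_cong_imp_ccl1_eq:
  assumes "(P, Q) \<in> tensor_cong"
  shows "ccl ent1 (sset_pairs P) = ccl ent1 (sset_pairs Q)"
proof -
  let ?ker = "{(P, Q). P \<subseteq> tensor_pairs \<and> Q \<subseteq> tensor_pairs \<and>
    ccl ent1 (sset_pairs P) = ccl ent1 (sset_pairs Q)}"
  have "suplat_cong tensor_pairs ?ker"
  proof (rule suplat_cong_kernel)
    fix \<P> assume "\<P> \<subseteq> Pow tensor_pairs"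
    then have "\<And>P. P \<in> \<P> \<Longrightarrow> sset_pairs P \<subseteq> domain_of K L1"
      using sset_pairs_subset_domain_of1 by blast
    then have "ccl ent1 (\<Union>P\<in>\<P>. ccl ent1 (sset_pairs P)) = ccl ent1 (\<Union>P\<in>\<P>. sset_pairs P)"
      by (rule ent1.ccl_UN_ccl)
    then show "ccl ent1 (sset_pairs (\<Union>\<P>)) = th_join ent1 ((\<lambda>P. ccl ent1 (sset_pairs P)) ` \<P>)"
      by (simp add: th_join_def sset_pairs_Union)
  qed
  moreover have "tensor_gens L L1 K ent \<subseteq> ?ker"
  proof (rule subrelI)
    fix P Q assume PQ: "(P, Q) \<in> tensor_gens L L1 K ent"
    then have "P \<subseteq> tensor_pairs \<and> Q \<subseteq> tensor_pairs"
      using tensor_gens_subset by blast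
    with ccl1_sset_pairs_eq_if_tensor_gens[OF PQ] show "(P, Q) \<in> ?ker"
      by simp
  qed
  ultimately have "tensor_cong \<subseteq> ?ker"
    unfolding tensor_rel_def by (rule cong_gen_least)
  with assms have "(P, Q) \<in> ?ker"
    by (rule subsetD[rotated])
  then show ?thesis
    by simp
qed

definition simple_tensor :: "'c subst \<Rightarrow> 'c elem \<Rightarrow> 'c tpair set" where
  "simple_tensor \<rho> d = {({\<rho>}, ccl ent {d})}"

lemma tensor_cong_simple_sact:
  assumes \<rho>: "\<rho> \<in> Subst L1" and \<tau>: "\<tau> \<in> Subst L" and d: "d \<in> domain_of K L"
  shows "(simple_tensor \<rho> (sact \<tau> d), simple_tensor (scomp \<rho> \<tau>) d) \<in> tensor_cong"
proof -
  have "({(qmult {\<rho>} {\<tau>}, ccl ent {d})}, {({\<rho>}, th_act ent {\<tau>} (ccl ent {d}))}) \<in> tensor_cong"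
    using \<rho> \<tau> d by (intro tensor_cong_act ccl_in_theories) auto
  moreover have "th_act ent {\<tau>} (ccl ent {d}) = ccl ent {sact \<tau> d}"
    using ccl_sset_ccl[of "{\<tau>}" "{d}"] \<tau> d by (simp add: th_act_def)
  ultimately show ?thesis
    unfolding simple_tensor_def by (simp add: qmult_singleton tensor.rel_sym)
qed

lemma tensor_cong_simple_agree:
  assumes \<alpha>: "\<alpha> \<in> Subst L1" and \<beta>: "\<beta> \<in> Subst L1" and g: "generic_elem m n \<in> domain_of K L"
    and agree: "\<And>v. v < m + n \<Longrightarrow> \<alpha> v = \<beta> v"
  shows "(simple_tensor \<alpha> (generic_elem m n), simple_tensor \<beta> (generic_elem m n)) \<in> tensor_cong"
proof -
  define N where "N = m + n"
  define \<kappa> :: "nat \<Rightarrow> 'c subst" where "\<kappa> w = (\<lambda>v. if v < N then Var v else Var w)" for w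
  have collapse: "(simple_tensor \<rho> (generic_elem m n),
      simple_tensor (scomp \<rho> (\<kappa> w)) (generic_elem m n)) \<in> tensor_cong" if "\<rho> \<in> Subst L1" for \<rho> w
  proof -
    have "\<kappa> w \<in> Subst L"
      unfolding \<kappa>_def Subst_def by (auto intro: Fm.Fm_Var)
    moreover have "sact (\<kappa> w) (generic_elem m n) = generic_elem m n"
      using sact_generic_elem_eq_iff[of "\<kappa> w" m n Var] by (simp add: \<kappa>_def N_def)
    ultimately show ?thesis
      using tensor_cong_simple_sact[OF that _ g] by metis
  qed
  text \<open>Link \<alpha> and \<beta> through the substitution that agrees with \<alpha> up to N and with \<beta> beyond.\<close>
  define \<mu> where "\<mu> = (\<lambda>v. if v \<le> N then \<alpha> v else \<beta> v)"
  have "\<mu> \<in> Subst L1"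
    using \<alpha> \<beta> unfolding \<mu>_def Subst_def by auto
  moreover have "scomp \<alpha> (\<kappa> N) = scomp \<mu> (\<kappa> N)" "scomp \<mu> (\<kappa> (Suc N)) = scomp \<beta> (\<kappa> (Suc N))"
    using agree by (auto simp: scomp_def \<kappa>_def \<mu>_def N_def)
  ultimately show ?thesis
    using collapse[OF \<alpha>, of N] collapse[of \<mu> N] collapse[of \<mu> "Suc N"] collapse[OF \<beta>, of "Suc N"]
    by (metis tensor.rel_sym tensor.rel_trans)
qed

lemma tensor_cong_simple:
  assumes \<rho>: "\<rho> \<in> Subst L1" and \<sigma>: "\<sigma> \<in> Subst L1"
    and d: "d \<in> domain_of K L" and z: "z \<in> domain_of K L" and eq: "sact \<rho> d = sact \<sigma> z"
  shows "(simple_tensor \<rho> d, simple_tensor \<sigma> z) \<in> tensor_cong"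
proof -
  have shape: "shape z = shape d"
    using arg_cong[OF eq, of shape] by simp
  have g: "shape d \<in> domain_of K L"
    using d by (rule shape_in_domain_of)
  have \<rho>': "scomp \<rho> (filler d) \<in> Subst L1" and \<sigma>': "scomp \<sigma> (filler z) \<in> Subst L1"
    using \<rho> \<sigma> filler_in_Subst[OF d] filler_in_Subst[OF z] Subst_subset
    by (blast intro: scomp_in_Subst)+
  have "(simple_tensor \<rho> d, simple_tensor (scomp \<rho> (filler d)) (shape d)) \<in> tensor_cong"
    using tensor_cong_simple_sact[OF \<rho> filler_in_Subst[OF d] g] by (simp add: sact_filler_shape)
  moreover have "(simple_tensor \<sigma> z, simple_tensor (scomp \<sigma> (filler z)) (shape d)) \<in> tensor_cong"
    using tensor_cong_simple_sact[OF \<sigma> filler_in_Subst[OF z] g]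
    by (simp add: sact_filler_shape flip: shape)
  moreover have "sact (scomp \<rho> (filler d)) (shape d) = sact (scomp \<sigma> (filler z)) (shape d)"
    using eq shape by (metis sact_filler_shape sact_sact)
  then have "(simple_tensor (scomp \<rho> (filler d)) (shape d),
      simple_tensor (scomp \<sigma> (filler z)) (shape d)) \<in> tensor_cong"
    using tensor_cong_simple_agree[OF \<rho>' \<sigma>'] g unfolding shape_def sact_generic_elem_eq_iff by blast
  ultimately show ?thesis
    by (meson tensor.rel_sym tensor.rel_trans)
qed

lemma tensor_cong_decompose:
  assumes x: "x \<subseteq> Subst L1" and \<Psi>: "\<Psi> \<subseteq> domain_of K L"
  shows "({(x, ccl ent \<Psi>)}, \<Union>\<sigma>\<in>x. \<Union>\<psi>\<in>\<Psi>. simple_tensor \<sigma> \<psi>) \<in> tensor_cong"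
proof -
  have "({(x, ccl ent \<Psi>)}, (\<lambda>x'. (x', ccl ent \<Psi>)) ` (\<lambda>\<sigma>. {\<sigma>}) ` x) \<in> tensor_cong"
    using tensor_cong_Union_left[of "(\<lambda>\<sigma>. {\<sigma>}) ` x" "ccl ent \<Psi>"] x ccl_in_theories[OF \<Psi>] by auto
  moreover have "(\<lambda>x'. (x', ccl ent \<Psi>)) ` (\<lambda>\<sigma>. {\<sigma>}) ` x = (\<Union>\<sigma>\<in>x. {({\<sigma>}, ccl ent \<Psi>)})"
    by blast
  moreover have "({({\<sigma>}, ccl ent \<Psi>)}, \<Union>\<psi>\<in>\<Psi>. simple_tensor \<sigma> \<psi>) \<in> tensor_cong" if "\<sigma> \<in> x" for \<sigma>
  proof -
    have "th_join ent ((\<lambda>\<psi>. ccl ent {\<psi>}) ` \<Psi>) = ccl ent \<Psi>"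
      using ccl_UN_ccl[of \<Psi> "\<lambda>\<psi>. {\<psi>}"] \<Psi> by (simp add: th_join_def subsetD)
    moreover have "(\<lambda>\<psi>. ccl ent {\<psi>}) ` \<Psi> \<subseteq> Th"
      using \<Psi> ccl_in_theories by auto
    moreover have "(\<lambda>y. ({\<sigma>}, y)) ` (\<lambda>\<psi>. ccl ent {\<psi>}) ` \<Psi> = (\<Union>\<psi>\<in>\<Psi>. simple_tensor \<sigma> \<psi>)"
      unfolding simple_tensor_def by blast
    ultimately show ?thesis
      using tensor_cong_join_right[of "{\<sigma>}" "(\<lambda>\<psi>. ccl ent {\<psi>}) ` \<Psi>"] that x by auto
  qed
  then have "(\<Union>\<sigma>\<in>x. {({\<sigma>}, ccl ent \<Psi>)}, \<Union>\<sigma>\<in>x. \<Union>\<psi>\<in>\<Psi>. simple_tensor \<sigma> \<psi>) \<in> tensor_cong"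
    by (rule tensor.rel_UN)
  ultimately show ?thesis
    by (auto intro: tensor.rel_trans)
qed

lemma tensor_le_simple_pair:
  assumes x: "x \<subseteq> Subst L1" and \<Psi>: "\<Psi> \<subseteq> domain_of K L" and "\<sigma> \<in> x" "\<chi> \<in> ccl ent \<Psi>"
  shows "tensor_le (simple_tensor \<sigma> \<chi>) {(x, ccl ent \<Psi>)}"
proof -
  have "({(x, ccl ent \<Psi>)}, \<Union>\<sigma>\<in>x. \<Union>\<psi>\<in>ccl ent \<Psi>. simple_tensor \<sigma> \<psi>) \<in> tensor_cong"
    using tensor_cong_decompose[OF x ccl_subset_domain_of[of \<Psi>]] ccl_idem[OF \<Psi>] by simp
  then have "tensor_le (\<Union>\<sigma>\<in>x. \<Union>\<psi>\<in>ccl ent \<Psi>. simple_tensor \<sigma> \<psi>) {(x, ccl ent \<Psi>)}"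
    and "(\<Union>\<sigma>\<in>x. \<Union>\<psi>\<in>ccl ent \<Psi>. simple_tensor \<sigma> \<psi>) \<subseteq> tensor_pairs"
    using tensor.rel_subset by (blast intro: tensor.cong_le_of_rel tensor.rel_sym)+
  moreover have "simple_tensor \<sigma> \<chi> \<subseteq> (\<Union>\<sigma>\<in>x. \<Union>\<psi>\<in>ccl ent \<Psi>. simple_tensor \<sigma> \<psi>)"
    using assms by blast
  ultimately show ?thesis
    by (blast intro: tensor.cong_le_trans tensor.cong_le_subset)
qed

text \<open>Being instance closed, covered P contains every ent1-consequence of sset_pairs P.\<close>
definition covered :: "'c tpair set \<Rightarrow> 'c elem set" where
  "covered P = {sact \<rho> d | \<rho> d. \<rho> \<in> Subst L1 \<and> d \<in> domain_of K L \<and> tensor_le (simple_tensor \<rho> d) P}"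

lemma tensor_le_simple_if_covered:
  assumes \<rho>: "\<rho> \<in> Subst L1" and d: "d \<in> domain_of K L" and "sact \<rho> d \<in> covered P"
  shows "tensor_le (simple_tensor \<rho> d) P"
proof -
  obtain \<rho>' d' where \<rho>': "\<rho>' \<in> Subst L1" and d': "d' \<in> domain_of K L"
    and eq: "sact \<rho> d = sact \<rho>' d'" and le: "tensor_le (simple_tensor \<rho>' d') P"
    using assms(3) unfolding covered_def by auto
  have "tensor_le (simple_tensor \<rho> d) (simple_tensor \<rho>' d')"
    using tensor_cong_simple[OF \<rho> \<rho>' d d' eq] by (rule tensor.cong_le_of_rel)
  then show ?thesis
    using le by (rule tensor.cong_le_trans)
qed

lemma tensor_le_pair_if_covered:
  assumes x: "x \<subseteq> Subst L1" and \<Psi>: "\<Psi> \<subseteq> domain_of K L"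
    and cov: "sset x \<Psi> \<subseteq> covered P" and P: "P \<subseteq> tensor_pairs"
  shows "tensor_le {(x, ccl ent \<Psi>)} P"
proof -
  have "tensor_le (\<Union>\<sigma>\<in>x. \<Union>\<psi>\<in>\<Psi>. simple_tensor \<sigma> \<psi>) P"
  proof (intro tensor.cong_le_UN P)
    fix \<sigma> \<psi> assume "\<sigma> \<in> x" "\<psi> \<in> \<Psi>"
    moreover from this have "sact \<sigma> \<psi> \<in> covered P"
      using cov unfolding sset_def by blast
    ultimately show "tensor_le (simple_tensor \<sigma> \<psi>) P"
      using x \<Psi> by (intro tensor_le_simple_if_covered) auto
  qed
  with tensor.cong_le_of_rel[OF tensor_cong_decompose[OF x \<Psi>]] show ?thesis
    by (rule tensor.cong_le_trans)
qed

lemma sset_pairs_subset_covered: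
  assumes P: "P \<subseteq> tensor_pairs"
  shows "sset_pairs P \<subseteq> covered P"
proof
  fix e assume "e \<in> sset_pairs P"
  then obtain x y \<sigma> z where p: "(x, y) \<in> P" and "\<sigma> \<in> x" "z \<in> y" and e: "e = sact \<sigma> z"
    unfolding sset_pairs_def sset_eq by auto
  with P have x: "x \<subseteq> Subst L1" and y: "y \<subseteq> domain_of K L" "ccl ent y = y"
    unfolding theories_def by auto
  have "tensor_le (simple_tensor \<sigma> z) {(x, y)}"
    using tensor_le_simple_pair[OF x y(1) \<open>\<sigma> \<in> x\<close>] \<open>z \<in> y\<close> y(2) by simp
  moreover have "tensor_le {(x, y)} P"
    using p P by (intro tensor.cong_le_subset) auto
  ultimately have "tensor_le (simple_tensor \<sigma> z) P"
    by (rule tensor.cong_le_trans)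
  then show "e \<in> covered P"
    unfolding covered_def e using x y \<open>\<sigma> \<in> x\<close> \<open>z \<in> y\<close> by blast
qed

lemma instance_closed_covered:
  assumes P: "P \<subseteq> tensor_pairs"
  shows "instance_closed (covered P)"
  unfolding instance_closed_def
proof (intro conjI allI impI)
  show "covered P \<subseteq> domain_of K L1"
    unfolding covered_def using domain_of_subset by (blast intro: sact_in_domain_of)
  fix \<rho> \<Psi> \<chi> assume "\<rho> \<in> Subst L1 \<and> ent \<Psi> \<chi> \<and> sact \<rho> ` \<Psi> \<subseteq> covered P"
  then have \<rho>: "\<rho> \<in> Subst L1" and ent: "ent \<Psi> \<chi>" and cov: "sset {\<rho>} \<Psi> \<subseteq> covered P"
    by auto
  have \<Psi>: "\<Psi> \<subseteq> domain_of K L" and \<chi>: "\<chi> \<in> domain_of K L"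
    using ent_in_domain_of[OF ent] by auto
  have "tensor_le (simple_tensor \<rho> \<chi>) {({\<rho>}, ccl ent \<Psi>)}"
    using tensor_le_simple_pair[of "{\<rho>}" \<Psi> \<rho> \<chi>] \<rho> \<Psi> ent by (simp add: ccl_def)
  moreover have "tensor_le {({\<rho>}, ccl ent \<Psi>)} P"
    using tensor_le_pair_if_covered[OF _ \<Psi> cov P] \<rho> by simp
  ultimately have "tensor_le (simple_tensor \<rho> \<chi>) P"
    by (rule tensor.cong_le_trans)
  then show "sact \<rho> \<chi> \<in> covered P"
    unfolding covered_def using \<rho> \<chi> by blast
qed

definition pairs_below :: "'c elem set \<Rightarrow> 'c tpair set" where
  "pairs_below C = {p \<in> tensor_pairs. sset (fst p) (snd p) \<subseteq> C}"

lemma pairs_below_subset: "pairs_below C \<subseteq> tensor_pairs"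
  unfolding pairs_below_def by blast

lemma tensor_le_pairs_below_covered:
  assumes P: "P \<subseteq> tensor_pairs"
  shows "tensor_le (pairs_below (covered P)) P"
proof -
  have "tensor_le {p} P" if p_below: "p \<in> pairs_below (covered P)" for p
  proof -
    obtain x y where p: "p = (x, y)" and x: "x \<subseteq> Subst L1" and y: "y \<in> Th"
      and cov: "sset x y \<subseteq> covered P"
      using p_below unfolding pairs_below_def by (cases p) auto
    then have "y \<subseteq> domain_of K L" "ccl ent y = y"
      by (simp_all add: theories_iff)
    with tensor_le_pair_if_covered[OF x _ cov P] show ?thesis
      unfolding p by simp
  qed
  then have "tensor_le (\<Union>p\<in>pairs_below (covered P). {p}) P"
    using P by (rule tensor.cong_le_UN)
  then show ?thesis
    by simp
qed

lemma tensor_cong_pairs_below_ccl1: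
  assumes P: "P \<subseteq> tensor_pairs"
  shows "(P, pairs_below (ccl ent1 (sset_pairs P))) \<in> tensor_cong"
proof (rule tensor.cong_le_antisym)
  have "sset_pairs P \<subseteq> ccl ent1 (sset_pairs P)"
    using sset_pairs_subset_domain_of1[OF P] by (rule ent1.ccl_increasing)
  then have "P \<subseteq> pairs_below (ccl ent1 (sset_pairs P))"
    using P unfolding pairs_below_def sset_pairs_def by blast
  then show "tensor_le P (pairs_below (ccl ent1 (sset_pairs P)))"
    using pairs_below_subset by (rule tensor.cong_le_subset)
  have "ccl ent1 (sset_pairs P) \<subseteq> covered P"
    using instance_closed_covered[OF P] sset_pairs_subset_covered[OF P]
    unfolding ccl_def ent1_def by blast
  then have "pairs_below (ccl ent1 (sset_pairs P)) \<subseteq> pairs_below (covered P)"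
    unfolding pairs_below_def by blast
  then have "tensor_le (pairs_below (ccl ent1 (sset_pairs P))) (pairs_below (covered P))"
    using pairs_below_subset by (rule tensor.cong_le_subset)
  with tensor_le_pairs_below_covered[OF P]
  show "tensor_le (pairs_below (ccl ent1 (sset_pairs P))) P"
    by (blast intro: tensor.cong_le_trans)
qed

lemma sset_pairs_pairs_below:
  assumes C: "C \<in> Th1"
  shows "sset_pairs (pairs_below C) = C"
proof
  show "sset_pairs (pairs_below C) \<subseteq> C"
    unfolding sset_pairs_def pairs_below_def by blast
  show "C \<subseteq> sset_pairs (pairs_below C)"
  proof
    fix e assume "e \<in> C"
    with C have e: "e \<in> domain_of K L1"
      unfolding theories_def by blast
    have d: "shape e \<in> domain_of K L" and \<rho>: "filler e \<in> Subst L1"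
      using shape_in_domain_of[OF e] filler_in_Subst[OF e] .
    have "sset {filler e} (ccl ent {shape e}) \<subseteq> ccl ent1 (sset {filler e} {shape e})"
      using sset_ccl_subset_ccl1[of "{filler e}" "{shape e}"] \<rho> d by simp
    also have "\<dots> = ccl ent1 {e}"
      by (simp add: sact_filler_shape)
    also have "\<dots> \<subseteq> C"
      using ent1.ccl_mono[of "{e}" C] \<open>e \<in> C\<close> C by (simp add: ent1.theories_iff)
    finally have "({filler e}, ccl ent {shape e}) \<in> pairs_below C"
      using \<rho> ccl_in_theories[of "{shape e}"] d unfolding pairs_below_def by simp
    moreover have "e \<in> sset {filler e} (ccl ent {shape e})"
      using ccl_increasing[of "{shape e}"] d sact_filler_shape[of e] by force
    ultimately show "e \<in> sset_pairs (pairs_below C)"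
      unfolding sset_pairs_def by force
  qed
qed

definition theory_class :: "'c elem set \<Rightarrow> 'c tpair set set" where
  "theory_class C = tensor_cong `` {pairs_below C}"

lemma theory_class_eq: "(pairs_below C, P) \<in> tensor_cong \<Longrightarrow> theory_class C = tensor_cong `` {P}"
  unfolding theory_class_def by (rule equiv_class_eq[OF tensor.rel_equiv])

lemma theory_class_some: "(pairs_below C, SOME P. P \<in> theory_class C) \<in> tensor_cong"
proof -
  have "pairs_below C \<in> theory_class C"
    unfolding theory_class_def using equiv_class_self[OF tensor.rel_equiv] pairs_below_subset by blast
  then have "(SOME P. P \<in> theory_class C) \<in> theory_class C"
    by (rule someI)
  then show ?thesis
    unfolding theory_class_def by simp
qed

lemma theory_class_image: "theory_class ` Th1 = tensor_carrier L L1 K ent"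
  unfolding tensor_carrier_def
proof (intro equalityI subsetI)
  fix c assume "c \<in> theory_class ` Th1"
  then obtain C where "c = tensor_cong `` {pairs_below C}"
    unfolding theory_class_def by blast
  then show "c \<in> Pow tensor_pairs // tensor_cong"
    using pairs_below_subset by (simp add: quotientI)
next
  fix c assume "c \<in> Pow tensor_pairs // tensor_cong"
  then obtain P where "P \<in> Pow tensor_pairs" and c: "c = tensor_cong `` {P}"
    by (rule quotientE)
  then have P: "P \<subseteq> tensor_pairs"
    by simp
  have "theory_class (ccl ent1 (sset_pairs P)) = c"
    using theory_class_eq[OF tensor.rel_sym[OF tensor_cong_pairs_below_ccl1[OF P]]] c by simp
  moreover have "ccl ent1 (sset_pairs P) \<in> Th1"
    using sset_pairs_subset_domain_of1[OF P] by (rule ent1.ccl_in_theories)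
  ultimately show "c \<in> theory_class ` Th1"
    by blast
qed

lemma inj_on_theory_class: "inj_on theory_class Th1"
proof (rule inj_onI)
  fix C C' assume C: "C \<in> Th1" and C': "C' \<in> Th1" and eq: "theory_class C = theory_class C'"
  then have "(pairs_below C, pairs_below C') \<in> tensor_cong"
    unfolding theory_class_def using pairs_below_subset
    by (simp add: eq_equiv_class_iff[OF tensor.rel_equiv])
  then have "ccl ent1 (sset_pairs (pairs_below C)) = ccl ent1 (sset_pairs (pairs_below C'))"
    by (rule tensor_cong_imp_ccl1_eq)
  with C C' show "C = C'"
    by (simp add: sset_pairs_pairs_below ent1.theories_iff)
qed

lemma theory_class_th_join:
  assumes X: "X \<subseteq> Th1"
  shows "theory_class (th_join ent1 X) = tensor_join L L1 K ent (theory_class ` X)"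
proof -
  let ?P = "\<Union>C\<in>X. pairs_below C"
  have P: "?P \<subseteq> tensor_pairs"
    using pairs_below_subset by blast
  have "sset_pairs ?P = \<Union>X"
    using X by (simp add: sset_pairs_Union sset_pairs_pairs_below subset_iff)
  with tensor_cong_pairs_below_ccl1[OF P]
  have "(?P, pairs_below (th_join ent1 X)) \<in> tensor_cong"
    by (simp add: th_join_def)
  moreover have "(?P, \<Union>C\<in>X. SOME P. P \<in> theory_class C) \<in> tensor_cong"
    using theory_class_some by (rule tensor.rel_UN)
  ultimately have "(pairs_below (th_join ent1 X), \<Union>C\<in>X. SOME P. P \<in> theory_class C) \<in> tensor_cong"
    by (blast intro: tensor.rel_sym tensor.rel_trans)
  then show ?thesis
    unfolding tensor_join_def by (simp add: theory_class_eq image_image)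
qed

lemma theory_class_th_act:
  assumes q: "q \<subseteq> Subst L1" and C: "C \<in> Th1"
  shows "theory_class (th_act ent1 q C) = tensor_act L L1 K ent q (theory_class C)"
proof -
  define Y where "Y = (SOME P. P \<in> theory_class C)"
  define qY where "qY = {(qmult q x, y) | x y. (x, y) \<in> Y}"
  have CY: "(pairs_below C, Y) \<in> tensor_cong"
    unfolding Y_def by (rule theory_class_some)
  then have Y: "Y \<subseteq> tensor_pairs"
    using tensor.rel_subset by blast
  then have "qY \<subseteq> tensor_pairs"
    unfolding qY_def using qmult_subset_Subst[OF q] by blast
  moreover have "ccl ent1 (sset_pairs qY) = th_act ent1 q C"
  proof -
    have "qY = (\<lambda>p. (qmult q (fst p), snd p)) ` Y"
      unfolding qY_def by force
    then have "sset_pairs qY = sset q (sset_pairs Y)"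
      by (simp add: sset_pairs_def sset_qmult sset_Union_right image_image)
    then have "ccl ent1 (sset_pairs qY) = ccl ent1 (sset q (ccl ent1 (sset_pairs Y)))"
      using ent1.ccl_sset_ccl[OF q sset_pairs_subset_domain_of1[OF Y]] by simp
    also have "ccl ent1 (sset_pairs Y) = C"
      using tensor_cong_imp_ccl1_eq[OF CY] C by (simp add: sset_pairs_pairs_below ent1.theories_iff)
    finally show ?thesis
      by (simp add: th_act_def)
  qed
  ultimately have "(qY, pairs_below (th_act ent1 q C)) \<in> tensor_cong"
    using tensor_cong_pairs_below_ccl1 by metis
  then show ?thesis
    unfolding tensor_act_def Y_def[symmetric] qY_def[symmetric]
    by (simp add: theory_class_eq tensor.rel_sym)
qed

lemma module_iso_theory_class:
  "module_iso (Pow (Subst L1)) Th1 (th_join ent1) (th_act ent1)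
     (tensor_carrier L L1 K ent) (tensor_join L L1 K ent) (tensor_act L L1 K ent) theory_class"
  unfolding module_iso_def bij_betw_def
proof (intro conjI allI impI ballI inj_on_theory_class theory_class_image)
  show "theory_class (th_join ent1 X) = tensor_join L L1 K ent (theory_class ` X)" if "X \<subseteq> Th1" for X
    using that by (rule theory_class_th_join)
  show "theory_class (th_act ent1 q C) = tensor_act L L1 K ent q (theory_class C)"
    if "q \<in> Pow (Subst L1)" "C \<in> Th1" for q C
    using that by (simp add: theory_class_th_act)
qed

end

theorem proposition3p2:
  fixes L L1 :: "'c lang" and K :: dkind and ent :: "'c elem set \<Rightarrow> 'c elem \<Rightarrow> bool"
  assumes "expansion L L1"
    and "consequence_relation L K ent"
  shows "\<exists>ent1. consequence_relation L1 K ent1 \<and>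
           (\<exists>f. module_iso (Pow (Subst L1))
                  (theories (domain_of K L1) ent1) (th_join ent1) (th_act ent1)
                  (tensor_carrier L L1 K ent) (tensor_join L L1 K ent) (tensor_act L L1 K ent) f)"
proof -
  interpret expansion_setting L K ent L1
    using assms by unfold_locales
  show ?thesis
    using consequence_relation_ent1 module_iso_theory_class by blast
qed

end
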